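(* (1) Let $M=2N-1$ and let $\mathcal F=\{f_1,\dots,f_M\}$ be a frame for $\mathbb R^N$. If $\mathbb M^{\mathcal F}$ is injective, then every $N$-element subset of $\mathcal F$ is linearly independent. (2) Let $N\ge 2$ and $M\ge 2N$. Then there exists an $M$-element frame $\mathcal F$ for $\mathbb R^N$ such that $\mathbb M^{\mathcal F}$ is injective but some $N$-element subset of $\mathcal F$ is linearly dependent.
   Context: A frame for $\mathbb R^N$ is a spanning family $\{f_1,\dots,f_M\}$ (indexed, repetitions allowed). $\mathbb M^{\mathcal F}:\mathbb R^N/\{\pm1\}\to\mathbb R^M$, $\hat x\mapsto(|\langle x,f_k\rangle|)_k$; injectivity means $|\langle x,f_k\rangle|=|\langle y,f_k\rangle|$ for all $k$ implies $y=\pm x$. *)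

theory Defs
  imports "HOL-Analysis.Analysis"
begin

text \<open>A frame for R^N with M elements is an indexed family f 0, ..., f (M-1) of vectors
  (repetitions allowed) spanning R^N. Here R^N is real^'n with N = CARD('n).\<close>

definition is_frame :: "nat \<Rightarrow> (nat \<Rightarrow> real^'n) \<Rightarrow> bool" where
  "is_frame M f \<longleftrightarrow> span (f ` {..<M}) = UNIV"

text \<open>Injectivity of the measurement map x mod sign to (|<x,f_k>|)_k.\<close>

definition phase_retrievable :: "nat \<Rightarrow> (nat \<Rightarrow> real^'n) \<Rightarrow> bool" where
  "phase_retrievable M f \<longleftrightarrow>
     (\<forall>x y::real^'n. (\<forall>k<M. \<bar>x \<bullet> f k\<bar> = \<bar>y \<bullet> f k\<bar>) \<longrightarrow> y = x \<or> y = - x)"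

definition lin_indep_family :: "(nat \<Rightarrow> real^'n) \<Rightarrow> nat set \<Rightarrow> bool" where
  "lin_indep_family f I \<longleftrightarrow>
     (\<forall>c::nat \<Rightarrow> real. (\<Sum>i\<in>I. c i *\<^sub>R f i) = 0 \<longrightarrow> (\<forall>i\<in>I. c i = 0))"

end

(* Injectivity of the real measurement map is equivalent to the complement property: for every
   set I of indices, f(I) or f(complement of I) spans R^N.  If neither spans, pick nonzero u, v
   orthogonal to the two parts; then u + v and u - v have the same measurements.  Conversely, if
   x and y have the same measurements, split the indices according to whether <x,f_k> equals
   <y,f_k> or its negative; the spanning part forces x = y or x = -y.

   For M = 2N - 1 the complement of an N-element index set has N - 1 elements and cannot span, so
   every N-element subfamily spans and hence is a basis.  For M >= 2N, take the moment vectors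
   (1, t, ..., t^(N-1)) at the nodes t = 0, ..., 2N - 2 and repeat them cyclically.  Any N of the
   first 2N - 1 are a Vandermonde basis, and of any partition of these 2N - 1 indices one part has
   at least N elements, which gives the complement property; but f_(2N-1) = f_0, so the N-element
   subfamily f_0, ..., f_(N-2), f_(2N-1) is dependent. *)

theory Submission
  imports Defs
begin

lemma CARD_le_card_if_span_eq_UNIV:
  fixes A :: "(real^'n) set"
  assumes "finite A" "span A = UNIV"
  shows "CARD('n) \<le> card A"
  using span_card_ge_dim[of A UNIV] assms by simp

lemma span_eq_UNIV_iff_orthogonal_only_0:
  fixes A :: "'a::euclidean_space set"
  shows "span A = UNIV \<longleftrightarrow> (\<forall>u. (\<forall>a\<in>A. u \<bullet> a = 0) \<longrightarrow> u = 0)"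
proof
  assume "span A = UNIV"
  then show "\<forall>u. (\<forall>a\<in>A. u \<bullet> a = 0) \<longrightarrow> u = 0"
    using orthogonal_to_span[of u A u for u] by (simp add: orthogonal_def)
next
  assume "\<forall>u. (\<forall>a\<in>A. u \<bullet> a = 0) \<longrightarrow> u = 0"
  then show "span A = UNIV"
    using span_not_UNIV_orthogonal by (meson span_base)
qed

lemma span_eq_UNIV_mono:
  "span A = UNIV \<Longrightarrow> A \<subseteq> B \<Longrightarrow> span B = UNIV"
  by (metis span_mono top.extremum_uniqueI)

definition complement_property :: "nat \<Rightarrow> (nat \<Rightarrow> real^'n) \<Rightarrow> bool" where
  "complement_property M f \<longleftrightarrow>
     (\<forall>I. span (f ` I) = UNIV \<or> span (f ` ({..<M} - I)) = UNIV)"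

lemma complement_property_if_phase_retrievable:
  assumes "phase_retrievable M f"
  shows "complement_property M f"
  unfolding complement_property_def
proof (rule ccontr)
  assume "\<not> (\<forall>I. span (f ` I) = UNIV \<or> span (f ` ({..<M} - I)) = UNIV)"
  then obtain I where "span (f ` I) \<noteq> UNIV" "span (f ` ({..<M} - I)) \<noteq> UNIV"
    by blast
  then obtain u v where u: "u \<noteq> 0" "\<forall>k\<in>I. u \<bullet> f k = 0"
    and v: "v \<noteq> 0" "\<forall>k\<in>{..<M} - I. v \<bullet> f k = 0"
    unfolding span_eq_UNIV_iff_orthogonal_only_0 by auto
  have "\<forall>k<M. \<bar>(u + v) \<bullet> f k\<bar> = \<bar>(u - v) \<bullet> f k\<bar>"
  proof (intro allI impI)
    fix k assume "k < M"
    then show "\<bar>(u + v) \<bullet> f k\<bar> = \<bar>(u - v) \<bullet> f k\<bar>"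
      using u v by (cases "k \<in> I") (auto simp: inner_add_left inner_diff_left)
  qed
  then consider "u - v = u + v" | "u - v = - (u + v)"
    using assms unfolding phase_retrievable_def by blast
  then show False
  proof cases
    case 1
    then have "2 *\<^sub>R v = 0" by (simp add: algebra_simps scaleR_2)
    with v show False by simp
  next
    case 2
    then have "2 *\<^sub>R u = 0" by (simp add: algebra_simps scaleR_2)
    with u show False by simp
  qed
qed

lemma phase_retrievable_if_complement_property:
  fixes f :: "nat \<Rightarrow> real^'n"
  assumes "complement_property M f"
  shows "phase_retrievable M f"
  unfolding phase_retrievable_def
proof (intro allI impI)
  fix x y :: "real^'n"
  assume same_abs: "\<forall>k<M. \<bar>x \<bullet> f k\<bar> = \<bar>y \<bullet> f k\<bar>"
  define S where "S = {k. x \<bullet> f k = y \<bullet> f k}"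
  have opposite: "x \<bullet> f k = - (y \<bullet> f k)" if "k \<in> {..<M} - S" for k
    using that same_abs by (auto simp: S_def abs_eq_iff)
  from assms consider "span (f ` S) = UNIV" | "span (f ` ({..<M} - S)) = UNIV"
    unfolding complement_property_def by blast
  then show "y = x \<or> y = - x"
  proof cases
    case 1
    moreover have "\<forall>a\<in>f ` S. (x - y) \<bullet> a = 0"
      by (auto simp: S_def inner_diff_left)
    ultimately have "x - y = 0"
      unfolding span_eq_UNIV_iff_orthogonal_only_0 by blast
    then show ?thesis by simp
  next
    case 2
    moreover have "\<forall>a\<in>f ` ({..<M} - S). (x + y) \<bullet> a = 0"
      by (auto simp: opposite inner_add_left)
    ultimately have "x + y = 0"
      unfolding span_eq_UNIV_iff_orthogonal_only_0 by blast
    then show ?thesis by (simp add: add_eq_0_iff2)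
  qed
qed

lemma is_frame_if_complement_property:
  assumes "complement_property M f"
  shows "is_frame M f"
proof -
  have "span (f ` {}) \<noteq> UNIV"
    using CARD_le_card_if_span_eq_UNIV[of "f ` {}"] by auto
  then show ?thesis
    using assms unfolding complement_property_def is_frame_def by force
qed

lemma lin_indep_family_if_spanning:
  fixes f :: "nat \<Rightarrow> real^'n"
  assumes "finite I" "card I \<le> CARD('n)" "span (f ` I) = UNIV"
  shows "lin_indep_family f I"
  unfolding lin_indep_family_def
proof (intro allI impI ballI, rule ccontr)
  fix c i
  assume dep: "(\<Sum>j\<in>I. c j *\<^sub>R f j) = 0" and i: "i \<in> I" "c i \<noteq> 0"
  have "c i *\<^sub>R f i + (\<Sum>j\<in>I - {i}. c j *\<^sub>R f j) = 0"
    using dep sum.remove[OF assms(1) i(1), of "\<lambda>j. c j *\<^sub>R f j"] by simp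
  then have "c i *\<^sub>R f i = - (\<Sum>j\<in>I - {i}. c j *\<^sub>R f j)"
    by (simp add: eq_neg_iff_add_eq_0)
  also have "\<dots> \<in> span (f ` (I - {i}))"
    by (intro span_neg span_sum span_scale) (auto intro: span_base)
  finally have "f i \<in> span (f ` (I - {i}))"
    using span_scale[of _ _ "1 / c i"] i(2) by fastforce
  then have "span (f ` (I - {i})) = span (f ` I)"
    using i(1) by (metis span_redundant image_insert insert_Diff)
  then have "span (f ` (I - {i})) = UNIV"
    using assms(3) by simp
  then have "CARD('n) \<le> card (f ` (I - {i}))"
    using assms(1) by (intro CARD_le_card_if_span_eq_UNIV) auto
  also have "\<dots> \<le> card (I - {i})"
    using assms(1) by (intro card_image_le) auto
  also have "\<dots> < card I"
    using assms(1) i(1) by (rule card_Diff1_less)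
  finally show False using assms(2) by simp
qed

lemma not_lin_indep_family_if_repeated:
  assumes "finite I" "i \<in> I" "j \<in> I" "i \<noteq> j" "f i = f j"
  shows "\<not> lin_indep_family f I"
proof -
  define c :: "nat \<Rightarrow> real" where "c k = (if k = i then 1 else if k = j then -1 else 0)" for k
  have "(\<Sum>k\<in>I. c k *\<^sub>R f k) = c i *\<^sub>R f i + (\<Sum>k\<in>I - {i}. c k *\<^sub>R f k)"
    using assms(1,2) by (rule sum.remove)
  also have "(\<Sum>k\<in>I - {i}. c k *\<^sub>R f k) = c j *\<^sub>R f j + (\<Sum>k\<in>I - {i} - {j}. c k *\<^sub>R f k)"
    using assms(1,3,4) by (intro sum.remove) auto
  also have "(\<Sum>k\<in>I - {i} - {j}. c k *\<^sub>R f k) = 0"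
    by (intro sum.neutral) (auto simp: c_def)
  finally have "(\<Sum>k\<in>I. c k *\<^sub>R f k) = 0"
    using assms(4,5) by (simp add: c_def)
  then show ?thesis
    using assms(2) unfolding lin_indep_family_def c_def by force
qed

lemma lin_indep_family_if_phase_retrievable:
  fixes f :: "nat \<Rightarrow> real^'n"
  assumes "phase_retrievable (2 * CARD('n) - 1) f"
    and I: "I \<subseteq> {..<2 * CARD('n) - 1}" "card I = CARD('n)"
  shows "lin_indep_family f I"
proof (rule lin_indep_family_if_spanning)
  let ?C = "{..<2 * CARD('n) - 1} - I"
  show "finite I"
    using I(1) finite_subset by blast
  have "card (f ` ?C) \<le> card ?C"
    by (intro card_image_le) auto
  also have "\<dots> < CARD('n)"
    using I \<open>finite I\<close> by (simp add: card_Diff_subset)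
  finally have "span (f ` ?C) \<noteq> UNIV"
    using CARD_le_card_if_span_eq_UNIV[of "f ` ?C"] by auto
  then show "span (f ` I) = UNIV"
    using complement_property_if_phase_retrievable[OF assms(1)]
    unfolding complement_property_def by blast
qed (use I in simp)

lemma polyfun_coeffs_eq_0_if_card_roots_ge:
  fixes c :: "nat \<Rightarrow> 'a::{idom,real_normed_div_algebra}"
  assumes "finite T" "n \<le> card T" "\<forall>t\<in>T. (\<Sum>j<n. c j * t ^ j) = 0"
  shows "\<forall>j<n. c j = 0"
proof (intro allI impI, rule ccontr)
  fix k assume "k < n" "c k \<noteq> 0"
  then have "{..<n} = {..n - 1}" "k \<le> n - 1" by auto
  then have roots: "finite {t. (\<Sum>j<n. c j * t ^ j) = 0}"
    "card {t. (\<Sum>j<n. c j * t ^ j) = 0} \<le> n - 1"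
    using polyfun_rootbound[of "n - 1" c] \<open>c k \<noteq> 0\<close> by auto
  have "card T \<le> card {t. (\<Sum>j<n. c j * t ^ j) = 0}"
    using assms(3) by (intro card_mono[OF roots(1)]) auto
  with roots(2) assms(2) \<open>k < n\<close> show False by linarith
qed

definition moment_vector :: "('n \<Rightarrow> nat) \<Rightarrow> real \<Rightarrow> real^'n" where
  "moment_vector h t = (\<chi> i. t ^ h i)"

lemma span_moment_vectors_eq_UNIV:
  fixes h :: "'n::finite \<Rightarrow> nat"
  assumes h: "bij_betw h UNIV {..<CARD('n)}" and "finite T" "CARD('n) \<le> card T"
  shows "span (moment_vector h ` T) = UNIV"
  unfolding span_eq_UNIV_iff_orthogonal_only_0
proof (intro allI impI)
  fix z :: "real^'n"
  assume "\<forall>a\<in>moment_vector h ` T. z \<bullet> a = 0"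
  define c where "c j = z $ inv_into UNIV h j" for j
  have "(\<Sum>j<CARD('n). c j * t ^ j) = z \<bullet> moment_vector h t" for t
  proof -
    have "(\<Sum>j<CARD('n). c j * t ^ j) = (\<Sum>i\<in>UNIV. c (h i) * t ^ h i)"
      by (rule sum.reindex_bij_betw[OF h, symmetric])
    also have "\<dots> = z \<bullet> moment_vector h t"
      using h by (simp add: c_def bij_betw_def moment_vector_def inner_vec_def)
    finally show ?thesis .
  qed
  then have "\<forall>j<CARD('n). c j = 0"
    using assms(2,3) \<open>\<forall>a\<in>moment_vector h ` T. z \<bullet> a = 0\<close>
    by (intro polyfun_coeffs_eq_0_if_card_roots_ge) auto
  moreover have "z $ i = c (h i)" for i
    using h by (simp add: c_def bij_betw_def)
  moreover have "h i < CARD('n)" for i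
    using h by (auto simp: bij_betw_def)
  ultimately show "z = 0"
    by (simp add: vec_eq_iff)
qed

definition full_spark :: "nat \<Rightarrow> (nat \<Rightarrow> real^'n) \<Rightarrow> bool" where
  "full_spark L f \<longleftrightarrow> (\<forall>J \<subseteq> {..<L}. CARD('n) \<le> card J \<longrightarrow> span (f ` J) = UNIV)"

lemma full_sparkD:
  "full_spark L f \<Longrightarrow> J \<subseteq> {..<L} \<Longrightarrow> CARD('n) \<le> card J \<Longrightarrow> span (f ` J) = UNIV"
  for f :: "nat \<Rightarrow> real^'n"
  by (simp add: full_spark_def)

lemma full_spark_moment_vectors:
  fixes h :: "'n::finite \<Rightarrow> nat"
  assumes "bij_betw h UNIV {..<CARD('n)}" "inj_on t {..<L}"
  shows "full_spark L (\<lambda>k. moment_vector h (t k))"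
  unfolding full_spark_def
proof (intro allI impI)
  fix J assume J: "J \<subseteq> {..<L}" "CARD('n) \<le> card J"
  then have "card (t ` J) = card J"
    using assms(2) by (intro card_image) (auto intro: inj_on_subset)
  then have "span (moment_vector h ` t ` J) = UNIV"
    using J by (intro span_moment_vectors_eq_UNIV[OF assms(1)]) (auto intro: finite_subset)
  then show "span ((\<lambda>k. moment_vector h (t k)) ` J) = UNIV"
    by (simp add: image_image)
qed

lemma complement_property_if_full_spark:
  fixes f :: "nat \<Rightarrow> real^'n"
  assumes "full_spark L f" "2 * CARD('n) - 1 \<le> L" "L \<le> M"
  shows "complement_property M f"
  unfolding complement_property_def
proof
  fix I
  have "card (I \<inter> {..<L}) + card ({..<L} - I) = card ((I \<inter> {..<L}) \<union> ({..<L} - I))"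
    by (rule card_Un_disjoint[symmetric]) auto
  also have "(I \<inter> {..<L}) \<union> ({..<L} - I) = {..<L}"
    by blast
  finally have "card (I \<inter> {..<L}) + card ({..<L} - I) = L"
    by simp
  then have "CARD('n) \<le> card (I \<inter> {..<L}) \<or> CARD('n) \<le> card ({..<L} - I)"
    using assms(2) by linarith
  then consider "CARD('n) \<le> card (I \<inter> {..<L})" | "CARD('n) \<le> card ({..<L} - I)"
    by blast
  then show "span (f ` I) = UNIV \<or> span (f ` ({..<M} - I)) = UNIV"
  proof cases
    case 1
    then have "span (f ` (I \<inter> {..<L})) = UNIV"
      by (intro full_sparkD[OF assms(1)]) auto
    moreover have "f ` (I \<inter> {..<L}) \<subseteq> f ` I"
      by blast
    ultimately show ?thesis
      by (simp add: span_eq_UNIV_mono)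
  next
    case 2
    then have "span (f ` ({..<L} - I)) = UNIV"
      by (intro full_sparkD[OF assms(1)]) auto
    moreover have "f ` ({..<L} - I) \<subseteq> f ` ({..<M} - I)"
      using assms(3) by auto
    ultimately show ?thesis
      by (simp add: span_eq_UNIV_mono)
  qed
qed

lemma exists_phase_retrievable_frame_with_dependent_subset:
  assumes N: "2 \<le> CARD('n::finite)" and M: "2 * CARD('n) \<le> M"
  shows "\<exists>f::nat \<Rightarrow> real^'n. is_frame M f \<and> phase_retrievable M f \<and>
           (\<exists>I. I \<subseteq> {..<M} \<and> card I = CARD('n) \<and> \<not> lin_indep_family f I)"
proof -
  let ?L = "2 * CARD('n) - 1"
  obtain h :: "'n \<Rightarrow> nat" where h: "bij_betw h UNIV {..<CARD('n)}"
    using ex_bij_betw_finite_nat[of "UNIV :: 'n set"] by (auto simp: atLeast0LessThan)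
  define f where "f k = moment_vector h (real (k mod ?L))" for k
  have "inj_on (\<lambda>k. real (k mod ?L)) {..<?L}"
    by (auto simp: inj_on_def)
  then have "full_spark ?L f"
    unfolding f_def by (rule full_spark_moment_vectors[OF h])
  then have cp: "complement_property M f"
    using M by (intro complement_property_if_full_spark[of ?L]) auto
  define I where "I = insert ?L {..<CARD('n) - 1}"
  have "\<not> lin_indep_family f I"
    using N by (intro not_lin_indep_family_if_repeated[of I ?L 0]) (auto simp: I_def f_def)
  moreover have "I \<subseteq> {..<M}" "card I = CARD('n)"
    using M N by (auto simp: I_def)
  ultimately show ?thesis
    using is_frame_if_complement_property[OF cp] phase_retrievable_if_complement_property[OF cp]
    by blast
qed

theorem corollary2p7:
  shows "(\<forall>(f::nat \<Rightarrow> real^'n). is_frame (2 * CARD('n) - 1) f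
            \<and> phase_retrievable (2 * CARD('n) - 1) f \<longrightarrow>
            (\<forall>I. I \<subseteq> {..<2 * CARD('n) - 1} \<and> card I = CARD('n) \<longrightarrow> lin_indep_family f I))
       \<and> (CARD('n) \<ge> 2 \<longrightarrow> (\<forall>M. M \<ge> 2 * CARD('n) \<longrightarrow>
            (\<exists>f::nat \<Rightarrow> real^'n. is_frame M f \<and> phase_retrievable M f \<and>
               (\<exists>I. I \<subseteq> {..<M} \<and> card I = CARD('n) \<and> \<not> lin_indep_family f I))))"
  using lin_indep_family_if_phase_retrievable exists_phase_retrievable_frame_with_dependent_subset
  by blast

end
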